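(* Let $\mathbb{K}\in\{\mathbb{R},\mathbb{C}\}$ and let $X$ be an infinite-dimensional normed vector space over $\mathbb{K}$. Suppose $o(X)=|X|=\dim X$. Then there exists a family $\mathcal{B}$ of (Hamel) bases of $X$ such that $|\mathcal{B}|=2^{|X|}$ and every element of $\mathcal{B}$ is a connected, locally connected and dense subset of $X$.
   Context: $|S|$ denotes the cardinality of a set $S$. $\dim X$ denotes the algebraic (Hamel) dimension of $X$, i.e. the cardinality of an algebraic basis of $X$ over $\mathbb{K}$. $o(X)$ denotes the cardinality of the family of all open subsets of $X$ (with respect to the norm topology). A basis always means an algebraic (Hamel) basis; topological notions refer to the norm topology and induced subspace topologies. *)

theory Defs
  imports "HOL-Analysis.Analysis" "HOL-Library.Equipollence"
begin

definition hamel_basis :: "('k::field \<Rightarrow> 'a::ab_group_add \<Rightarrow> 'a) \<Rightarrow> 'a set \<Rightarrow> bool" where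
  "hamel_basis sc B \<longleftrightarrow> \<not> module.dependent sc B \<and> module.span sc B = UNIV"

definition complex_normed_structure :: "(complex \<Rightarrow> 'a::real_normed_vector \<Rightarrow> 'a) \<Rightarrow> bool" where
  "complex_normed_structure sc \<longleftrightarrow> vector_space sc
     \<and> (\<forall>r x. sc (complex_of_real r) x = scaleR r x)
     \<and> (\<forall>c x. norm (sc c x) = cmod c * norm x)"

end

theory Submission
  imports Defs
begin

(* Call a subset of X a test set if it is a nonempty open convex set G, or a set G - (A \<union> B)
  where the open sets A and B both meet G but do not meet each other inside G. A set meeting
  every test set is dense, and its trace on every open convex set is connected; hence it is
  connected and locally connected.

  There are at most o(X)^3 = |X| test sets, and none of them lies in the span of fewer than
  dim X = |X| vectors: if G - (A \<union> B) lay in the span of a small set P, pick p in G \<inter> A and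
  q in G \<inter> B outside span P and a direction u outside span (P \<union> {p, q}); for u small the
  polygon p, p + u, q + u, q is connected, lies in G and misses span P, hence lies in A \<union> B
  and meets both, which is impossible. So a transfinite recursion of
  length |X| picks two vectors in every test set such that all chosen vectors are linearly
  independent. For each S \<subseteq> X, keeping from the pair of the i-th test set the first vector if
  i \<in> S and the second one otherwise, and completing with vectors not chosen at all, gives a
  Hamel basis meeting every test set; distinct S give distinct bases. *)

unbundle cardinal_syntax

section \<open>Test sets\<close>

definition test_sets :: "'a::real_normed_vector set set" where
  "test_sets = {G - (A \<union> B) | G A B. open G \<and> convex G \<and> G \<noteq> {} \<and> open A \<and> open B \<and>
      (A = {} \<and> B = {} \<or> G \<inter> A \<noteq> {} \<and> G \<inter> B \<noteq> {} \<and> G \<inter> A \<inter> B = {})}"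

lemma open_convex_in_test_sets:
  assumes "open G" "convex G" "G \<noteq> {}"
  shows "G \<in> test_sets"
proof -
  have "G = G - ({} \<union> {})"
    by simp
  then show ?thesis
    unfolding test_sets_def using assms by blast
qed

lemma separation_in_test_sets:
  assumes "open G" "convex G" "open A" "open B" "G \<inter> A \<noteq> {}" "G \<inter> B \<noteq> {}" "G \<inter> A \<inter> B = {}"
  shows "G - (A \<union> B) \<in> test_sets"
  unfolding test_sets_def using assms by blast

lemma Int_open_nonempty_if_meets_test_sets:
  assumes meets: "\<forall>F\<in>test_sets. D \<inter> F \<noteq> {}" and "open S" "S \<noteq> {}"
  shows "D \<inter> S \<noteq> {}"
proof -
  obtain x e where "e > 0" "ball x e \<subseteq> S"
    using assms(2,3) open_contains_ball by blast
  then show ?thesis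
    using meets open_convex_in_test_sets[of "ball x e"] by auto
qed

lemma connected_Int_convex_if_meets_test_sets:
  assumes meets: "\<forall>F\<in>test_sets. D \<inter> F \<noteq> {}" and G: "open G" "convex G"
  shows "connected (D \<inter> G)"
  unfolding connected_def
proof (rule notI, elim exE conjE)
  fix A B assume A: "open A" and B: "open B" and cover: "D \<inter> G \<subseteq> A \<union> B"
    and disj: "A \<inter> B \<inter> (D \<inter> G) = {}" and "A \<inter> (D \<inter> G) \<noteq> {}" "B \<inter> (D \<inter> G) \<noteq> {}"
  then have "G \<inter> A \<noteq> {}" "G \<inter> B \<noteq> {}"
    by auto
  moreover have "G \<inter> A \<inter> B = {}"
    using Int_open_nonempty_if_meets_test_sets[OF meets, of "G \<inter> A \<inter> B"] G A B disj by auto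
  ultimately have "G - (A \<union> B) \<in> test_sets"
    using separation_in_test_sets G A B by blast
  then have "D \<inter> (G - (A \<union> B)) \<noteq> {}"
    using meets by blast
  then show False
    using cover by blast
qed

lemma connected_dense_if_meets_test_sets:
  assumes meets: "\<forall>F\<in>test_sets. D \<inter> F \<noteq> {}"
  shows "connected D" and "locally connected D" and "closure D = UNIV"
proof -
  show "connected D"
    using connected_Int_convex_if_meets_test_sets[OF meets, of UNIV] by simp
  show "locally connected D"
    unfolding locally_def
  proof (intro allI impI)
    fix W x assume "openin (top_of_set D) W \<and> x \<in> W"
    then obtain T e where "open T" "W = D \<inter> T" "x \<in> W" "e > 0" "ball x e \<subseteq> T"
      by (metis IntD2 open_contains_ball openin_open)
    then show "\<exists>U V. openin (top_of_set D) U \<and> connected V \<and> x \<in> U \<and> U \<subseteq> V \<and> V \<subseteq> W"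
      using connected_Int_convex_if_meets_test_sets[OF meets, of "ball x e"]
      by (intro exI[of _ "D \<inter> ball x e"]) (auto simp: openin_open_Int)
  qed
  have "x \<in> closure D" for x
    unfolding closure_approachable
  proof (intro allI impI)
    fix e :: real
    assume "e > 0"
    then have "D \<inter> ball x e \<noteq> {}"
      using Int_open_nonempty_if_meets_test_sets[OF meets, of "ball x e"] by simp
    then show "\<exists>y\<in>D. dist y x < e"
      by (auto simp: dist_commute)
  qed
  then show "closure D = UNIV"
    by auto
qed

lemma test_sets_lepoll:
  assumes "infinite (UNIV :: 'a::real_normed_vector set)" and "{U::'a set. open U} \<lesssim> (UNIV :: 'a set)"
  shows "(test_sets :: 'a set set) \<lesssim> (UNIV :: 'a set)"
proof -
  let ?O = "{U::'a set. open U}"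
  have square: "(UNIV :: 'a set) \<times> (UNIV :: 'a set) \<approx> (UNIV :: 'a set)"
    using card_of_Times_same_infinite[OF assms(1)] eqpoll_iff_card_of_ordIso by blast
  have "(UNIV :: 'a set) \<times> (UNIV :: 'a set) \<times> (UNIV :: 'a set) \<approx> (UNIV :: 'a set) \<times> (UNIV :: 'a set)"
    by (rule times_eqpoll_cong[OF eqpoll_refl square])
  then have cube: "(UNIV :: 'a set) \<times> (UNIV :: 'a set) \<times> (UNIV :: 'a set) \<lesssim> (UNIV :: 'a set)"
    using square by (blast intro: eqpoll_imp_lepoll eqpoll_trans)
  have "test_sets \<subseteq> (\<lambda>(G, A, B). G - (A \<union> B)) ` (?O \<times> ?O \<times> ?O)"
    unfolding test_sets_def by (fastforce intro: rev_image_eqI)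
  then have "(test_sets :: 'a set set) \<lesssim> ?O \<times> ?O \<times> ?O"
    by (rule subset_image_lepoll)
  also have "\<dots> \<lesssim> (UNIV :: 'a set) \<times> (UNIV :: 'a set) \<times> (UNIV :: 'a set)"
    using assms(2) by (intro times_lepoll_mono)
  finally show ?thesis
    using cube by (rule lepoll_trans)
qed

section \<open>Independent choices along a well-order\<close>

lemma (in wo_rel) finite_has_max:
  assumes "finite A" "A \<noteq> {}" "A \<subseteq> Field r"
  shows "\<exists>m\<in>A. \<forall>a\<in>A. (a, m) \<in> r"
  using assms
proof (induction rule: finite_ne_induct)
  case (singleton a)
  then show ?case using REFL by (auto simp: refl_on_def)
next
  case (insert a A)
  then obtain m where "m \<in> A" "\<forall>b\<in>A. (b, m) \<in> r" by auto
  then show ?case using insert.prems max2_greater_among[of a m] TRANS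
    by (simp add: trans_def) (metis subsetD)
qed

context vector_space
begin

lemma independent_lepoll_if_span_eq:
  assumes "independent B" "span B = span P"
  shows "B \<lesssim> P"
proof -
  obtain C where "C \<subseteq> P" "independent C" "P \<subseteq> span C"
    using maximal_independent_subset_extend[of "{}" P] independent_empty by auto
  then have "span C = span B"
    using assms(2) span_mono[of C P] span_minimal[of P "span C"] by auto
  then obtain f where "bij_betw f B C"
    using bij_if_span_eq_span_bases[OF assms(1) \<open>independent C\<close>] by blast
  then show ?thesis
    using \<open>C \<subseteq> P\<close> by (metis bij_betw_imp_inj_on bij_betw_imp_surj_on lepoll_def)
qed

lemma independent_if_notin_span_underS:
  assumes wo: "wo_rel r" and field: "Field r = UNIV"
    and fresh: "\<And>i. v i \<notin> span (v ` underS r i)"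
  shows "inj v" and "independent (range v)"
proof -
  have below: "v j \<in> v ` underS r i" if "(j, i) \<in> r" "j \<noteq> i" for i j
    using that by (auto simp: underS_def)
  have total: "(i, j) \<in> r \<or> (j, i) \<in> r" for i j
    using wo_rel.TOTALS[OF wo] field by auto
  show "inj v"
  proof (rule injI, rule ccontr)
    fix i j assume "v i = v j" "i \<noteq> j"
    then show False
      using total[of i j] below[of i j] below[of j i] fresh[of i] fresh[of j] span_base by metis
  qed
  have finite_independent: "independent (v ` I)" if "finite I" for I
    using that
  proof (induction rule: finite_remove_induct)
    case empty
    then show ?case by (simp add: independent_empty)
  next
    case (remove I)
    then obtain m where m: "m \<in> I" "\<forall>i\<in>I. (i, m) \<in> r"
      using wo_rel.finite_has_max[OF wo] field by blast
    have "v ` (I - {m}) \<subseteq> v ` underS r m"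
      using m below by auto
    then have "v m \<notin> span (v ` (I - {m}))"
      using fresh[of m] span_mono by blast
    then have "independent (insert (v m) (v ` (I - {m})))"
      using remove.IH[OF m(1)] by (simp add: independent_insertI)
    moreover have "insert (v m) (v ` (I - {m})) = v ` I"
      using m(1) by blast
    ultimately show ?case by simp
  qed
  show "independent (range v)"
  proof
    assume "dependent (range v)"
    then obtain T where "finite T" "T \<subseteq> range v" "dependent T"
      unfolding dependent_explicit by blast
    then show False
      using finite_independent by (metis finite_subset_image)
  qed
qed

lemma independent_choice:
  fixes E :: "'i \<Rightarrow> 'b set"
  assumes not_spanned: "\<And>i P. |P| <o |UNIV :: 'i set| \<Longrightarrow> \<exists>z\<in>E i. z \<notin> span P"
  obtains v where "inj v" "independent (range v)" "\<And>i. v i \<in> E i"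
proof -
  \<comment> \<open>Recursion along the cardinal well-order of 'i, whose proper initial segments are small.\<close>
  define r where "r = |UNIV :: 'i set|"
  have wo: "wo_rel r"
    unfolding r_def wo_rel_def by (rule card_of_Well_order)
  have field: "Field r = UNIV"
    unfolding r_def by (rule Field_card_of)
  define step where "step f i = (SOME z. z \<in> E i \<and> z \<notin> span (f ` underS r i))"
    for f :: "'i \<Rightarrow> 'b" and i
  define v where "v = wo_rel.worec r step"
  have "wo_rel.adm_wo r step"
    unfolding wo_rel.adm_wo_def[OF wo] step_def by (simp cong: image_cong)
  then have v_step: "v i = step v i" for i
    unfolding v_def by (metis wo wo_rel.worec_fixpoint)
  have "|v ` underS r i| <o r" for i
    using card_of_underS[OF card_of_Card_order, of i UNIV] unfolding r_def
    by (rule ordLeq_ordLess_trans[OF card_of_image]) (simp add: Field_card_of)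
  then have "\<exists>z. z \<in> E i \<and> z \<notin> span (v ` underS r i)" for i
    using not_spanned unfolding r_def by blast
  then have "v i \<in> E i \<and> v i \<notin> span (v ` underS r i)" for i
    using v_step[of i] unfolding step_def by (metis (no_types, lifting) someI_ex)
  then show thesis
    using that independent_if_notin_span_underS[OF wo field] by blast
qed

lemma hamel_basis_between:
  assumes "independent D" "D \<subseteq> V" "span V = UNIV"
  obtains B where "D \<subseteq> B" "B \<subseteq> V" "hamel_basis scale B"
proof -
  obtain B where B: "D \<subseteq> B" "B \<subseteq> V" "independent B" "V \<subseteq> span B"
    using maximal_independent_subset_extend[OF assms(2,1)] by blast
  then have "span B = UNIV"
    using assms(3) span_minimal[of V "span B"] by auto
  with B show thesis
    using that unfolding hamel_basis_def by blast
qed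

end

section \<open>Spans in a normed space over an extension of the reals\<close>

text \<open>Covers the real case (emb = id) and the complex case (emb = complex_of_real) at once.\<close>

locale scaleR_extension = vector_space sc
  for sc :: "'k::field \<Rightarrow> 'a::real_normed_vector \<Rightarrow> 'a" +
  fixes emb :: "real \<Rightarrow> 'k"
  assumes sc_emb: "sc (emb r) x = r *\<^sub>R x"
begin

lemma span_scaleR: "x \<in> span S \<Longrightarrow> r *\<^sub>R x \<in> span S"
  using span_scale[of x S "emb r"] by (simp add: sc_emb)

lemma scaleR_in_span_iff: "c \<noteq> 0 \<Longrightarrow> c *\<^sub>R x \<in> span S \<longleftrightarrow> x \<in> span S"
  using span_scaleR[of "c *\<^sub>R x" S "inverse c"] span_scaleR[of x S c] by auto

lemma span_eq_UNIV_if_open_subset: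
  assumes "open S" "S \<noteq> {}" "S \<subseteq> span P"
  shows "span P = UNIV"
proof -
  obtain x e where x: "x \<in> S" and e: "e > 0" "ball x e \<subseteq> S"
    using assms(1,2) open_contains_ball by blast
  have nonzero_in_span: "y \<in> span P" if "y \<noteq> 0" for y
  proof -
    define t where "t = e / (2 * norm y)"
    have "t > 0" "x + t *\<^sub>R y \<in> ball x e"
      using e(1) that by (simp_all add: t_def dist_norm)
    then have "x + t *\<^sub>R y \<in> span P"
      using e(2) assms(3) by blast
    then have "(x + t *\<^sub>R y) - x \<in> span P"
      using x assms(3) by (blast intro: span_diff)
    then show ?thesis
      using scaleR_in_span_iff[of t] \<open>t > 0\<close> by simp
  qed
  have "y \<in> span P" for y
    using nonzero_in_span[of y] span_zero by (cases "y = 0") auto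
  then show ?thesis
    by auto
qed

lemma closed_segment_shift_disjoint_span:
  assumes "a \<notin> span P" "u \<notin> span (insert a P)"
  shows "closed_segment a (a + c *\<^sub>R u) \<inter> span P = {}"
proof -
  have off_span: "a + s *\<^sub>R u \<notin> span P" for s
  proof
    assume in_span: "a + s *\<^sub>R u \<in> span P"
    then have "s \<noteq> 0"
      using assms(1) by (cases "s = 0") simp_all
    have "a + s *\<^sub>R u \<in> span (insert a P)"
      using in_span span_mono[of P "insert a P"] by blast
    moreover have "a \<in> span (insert a P)"
      by (simp add: span_base)
    ultimately have "(a + s *\<^sub>R u) - a \<in> span (insert a P)"
      by (rule span_diff)
    then show False
      using assms(2) scaleR_in_span_iff[OF \<open>s \<noteq> 0\<close>] by simp
  qed
  have "z \<notin> span P" if z: "z \<in> closed_segment a (a + c *\<^sub>R u)" for z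
  proof -
    obtain t where "z = (1 - t) *\<^sub>R a + t *\<^sub>R (a + c *\<^sub>R u)"
      using z unfolding closed_segment_def by blast
    also have "\<dots> = a + (t * c) *\<^sub>R u"
      by (simp add: algebra_simps)
    finally show ?thesis
      using off_span by simp
  qed
  then show ?thesis
    by blast
qed

lemma closed_segment_translate_disjoint_span:
  assumes "a \<in> span Q" "b \<in> span Q" "u \<notin> span Q" "c \<noteq> 0"
  shows "closed_segment (a + c *\<^sub>R u) (b + c *\<^sub>R u) \<inter> span Q = {}"
proof -
  have off_span: "(1 - t) *\<^sub>R a + t *\<^sub>R b + c *\<^sub>R u \<notin> span Q" for t
  proof
    assume in_span: "(1 - t) *\<^sub>R a + t *\<^sub>R b + c *\<^sub>R u \<in> span Q"
    have "(1 - t) *\<^sub>R a + t *\<^sub>R b \<in> span Q"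
      using assms(1,2) by (intro span_add span_scaleR)
    with in_span have "((1 - t) *\<^sub>R a + t *\<^sub>R b + c *\<^sub>R u) - ((1 - t) *\<^sub>R a + t *\<^sub>R b) \<in> span Q"
      by (rule span_diff)
    then show False
      using assms(3,4) scaleR_in_span_iff by simp
  qed
  have "z \<notin> span Q" if z: "z \<in> closed_segment (a + c *\<^sub>R u) (b + c *\<^sub>R u)" for z
  proof -
    obtain t where "z = (1 - t) *\<^sub>R (a + c *\<^sub>R u) + t *\<^sub>R (b + c *\<^sub>R u)"
      using z unfolding closed_segment_def by blast
    also have "\<dots> = (1 - t) *\<^sub>R a + t *\<^sub>R b + c *\<^sub>R u"
      by (simp add: algebra_simps)
    finally show ?thesis
      using off_span by simp
  qed
  then show ?thesis
    by blast
qed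

lemma connected_avoiding_span:
  assumes G: "open G" "convex G" and p: "p \<in> G" "p \<notin> span P" and q: "q \<in> G" "q \<notin> span P"
    and u: "u \<notin> span (insert p (insert q P))"
  obtains C where "connected C" "C \<subseteq> G" "p \<in> C" "q \<in> C" "C \<inter> span P = {}"
proof -
  let ?Q = "insert p (insert q P)"
  have pq: "p \<in> span ?Q" "q \<in> span ?Q"
    by (simp_all add: span_base)
  have "span P \<subseteq> span ?Q" "span (insert p P) \<subseteq> span ?Q" "span (insert q P) \<subseteq> span ?Q"
    by (rule span_mono; blast)+
  then have u': "u \<notin> span (insert p P)" "u \<notin> span (insert q P)" "u \<noteq> 0"
    using u span_zero by auto
  obtain e where e: "e > 0" "ball p e \<subseteq> G" "ball q e \<subseteq> G"
  proof -
    obtain e1 e2 where "e1 > 0" "ball p e1 \<subseteq> G" "e2 > 0" "ball q e2 \<subseteq> G"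
      using G(1) p(1) q(1) open_contains_ball by meson
    moreover have "ball p (min e1 e2) \<subseteq> ball p e1" "ball q (min e1 e2) \<subseteq> ball q e2"
      by (simp_all add: subset_ball)
    ultimately show thesis
      using that[of "min e1 e2"] by auto
  qed
  define c where "c = e / (2 * norm u)"
  have "c \<noteq> 0" "norm (c *\<^sub>R u) < e"
    using e(1) u'(3) by (simp_all add: c_def)
  then have "p + c *\<^sub>R u \<in> G" "q + c *\<^sub>R u \<in> G"
    using e(2,3) by (auto simp: dist_norm)
  define C where "C = closed_segment p (p + c *\<^sub>R u) \<union> closed_segment (p + c *\<^sub>R u) (q + c *\<^sub>R u)
      \<union> closed_segment q (q + c *\<^sub>R u)"
  show thesis
  proof (rule that)
    show "connected C"
      unfolding C_def by (intro connected_Un) auto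
    show "C \<subseteq> G"
      unfolding C_def using G(2) p(1) q(1) \<open>p + c *\<^sub>R u \<in> G\<close> \<open>q + c *\<^sub>R u \<in> G\<close>
      by (auto dest: closed_segment_subset)
    show "p \<in> C" "q \<in> C"
      unfolding C_def by auto
    show "C \<inter> span P = {}"
      unfolding C_def
      using closed_segment_shift_disjoint_span[OF p(2) u'(1), of c]
        closed_segment_shift_disjoint_span[OF q(2) u'(2), of c]
        closed_segment_translate_disjoint_span[OF pq u \<open>c \<noteq> 0\<close>] \<open>span P \<subseteq> span ?Q\<close>
      by blast
  qed
qed

lemma span_Compl_independent:
  assumes "independent Z"
  shows "span (- Z) = UNIV"
proof -
  have "z \<in> span (- Z)" for z
  proof (cases "z \<in> Z")
    case False
    then show ?thesis by (simp add: span_base)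
  next
    case True
    then have "z \<noteq> 0"
      using assms dependent_zero by blast
    have "2 *\<^sub>R z \<notin> Z"
    proof
      assume "2 *\<^sub>R z \<in> Z"
      moreover have "2 *\<^sub>R z \<noteq> z"
        using \<open>z \<noteq> 0\<close> by (simp add: scaleR_2)
      ultimately have "2 *\<^sub>R z \<in> span (Z - {z})"
        by (simp add: span_base)
      then have "z \<in> span (Z - {z})"
        using scaleR_in_span_iff[of 2 z] by simp
      then show False
        using assms True unfolding dependent_def by blast
    qed
    then have "2 *\<^sub>R z \<in> span (- Z)"
      by (simp add: span_base)
    then show ?thesis
      using scaleR_in_span_iff[of 2 z "- Z"] by simp
  qed
  then show ?thesis
    by auto
qed

lemma bases_selecting_from_pairs:
  fixes v :: "'i \<times> bool \<Rightarrow> 'a"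
  assumes inj: "inj v" and indep: "independent (range v)"
  shows "\<exists>\<B>::'a set set. \<B> \<approx> (UNIV :: 'i set set)
           \<and> (\<forall>B\<in>\<B>. hamel_basis sc B \<and> (\<forall>i. \<exists>b. v (i, b) \<in> B))"
proof -
  define choice where "choice S = range (\<lambda>i. v (i, i \<in> S))" for S
  have "\<exists>B. choice S \<subseteq> B \<and> B \<subseteq> choice S \<union> - range v \<and> hamel_basis sc B" for S
  proof -
    have "choice S \<subseteq> range v"
      by (auto simp: choice_def)
    with indep have "independent (choice S)"
      by (rule independent_mono)
    moreover have "span (- range v) \<subseteq> span (choice S \<union> - range v)"
      by (rule span_mono) (rule Un_upper2)
    then have "span (choice S \<union> - range v) = UNIV"
      unfolding span_Compl_independent[OF indep] by (rule top.extremum_uniqueI)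
    ultimately obtain B where "choice S \<subseteq> B" "B \<subseteq> choice S \<union> - range v" "hamel_basis sc B"
      by (rule hamel_basis_between[OF _ Un_upper1])
    then show ?thesis
      by blast
  qed
  then obtain basis where basis: "\<And>S. choice S \<subseteq> basis S \<and> basis S \<subseteq> choice S \<union> - range v
      \<and> hamel_basis sc (basis S)"
    by metis
  have mem: "v (i, True) \<in> basis S \<longleftrightarrow> i \<in> S" for i S
  proof -
    have "v (i, True) \<in> basis S \<longleftrightarrow> v (i, True) \<in> choice S"
      using basis[of S] by blast
    also have "\<dots> \<longleftrightarrow> i \<in> S"
      using inj by (auto simp: choice_def inj_eq)
    finally show ?thesis .
  qed
  have "inj basis"
  proof (rule injI)
    fix S S'
    assume "basis S = basis S'"
    then show "S = S'"
      using mem[of _ S] mem[of _ S'] by auto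
  qed
  moreover have "\<exists>b. v (i, b) \<in> basis S" for i S
    using basis[of S] by (auto simp: choice_def)
  ultimately show ?thesis
    using basis by (intro exI[of _ "range basis"]) (auto intro: inj_on_image_eqpoll_self)
qed

end

section \<open>Spaces whose dimension equals their cardinality\<close>

lemma card_of_insert_ordLess_infinite:
  assumes "infinite C" and "|A| <o |C|"
  shows "|insert a A| <o |C|"
proof -
  have "|{a}| <o |C|"
    by (rule finite_ordLess_infinite[OF card_of_Well_order card_of_Well_order])
      (simp_all add: Field_card_of assms(1))
  then show ?thesis
    using card_of_Un_ordLess_infinite[OF assms(1)] assms(2) by (metis insert_is_Un)
qed

text \<open>For infinite X, small_not_spanning is the statement dim X = |X|.\<close>

locale dim_eq_card = scaleR_extension sc emb
  for sc :: "'k::field \<Rightarrow> 'a::real_normed_vector \<Rightarrow> 'a" and emb +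
  assumes infinite_UNIV: "infinite (UNIV :: 'a set)"
    and small_not_spanning: "|P| <o |UNIV :: 'a set| \<Longrightarrow> span P \<noteq> UNIV"
begin

lemma open_not_subset_small_span:
  assumes "open S" "S \<noteq> {}" "|P| <o |UNIV :: 'a set|"
  shows "\<not> S \<subseteq> span P"
  using span_eq_UNIV_if_open_subset[OF assms(1,2)] small_not_spanning[OF assms(3)] by blast

lemma separated_not_subset_small_span:
  assumes G: "open G" "convex G" and A: "open A" and B: "open B"
    and meets: "G \<inter> A \<noteq> {}" "G \<inter> B \<noteq> {}" and disj: "G \<inter> A \<inter> B = {}"
    and small: "|P| <o |UNIV :: 'a set|"
  shows "\<not> G - (A \<union> B) \<subseteq> span P"
proof
  assume covered: "G - (A \<union> B) \<subseteq> span P"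
  obtain p where p: "p \<in> G \<inter> A" "p \<notin> span P"
    using open_not_subset_small_span[of "G \<inter> A" P] G A meets small by blast
  obtain q where q: "q \<in> G \<inter> B" "q \<notin> span P"
    using open_not_subset_small_span[of "G \<inter> B" P] G B meets small by blast
  have "|insert p (insert q P)| <o |UNIV :: 'a set|"
    using small by (intro card_of_insert_ordLess_infinite infinite_UNIV)
  then obtain u where "u \<notin> span (insert p (insert q P))"
    using small_not_spanning by blast
  then obtain C where C: "connected C" "C \<subseteq> G" "p \<in> C" "q \<in> C" "C \<inter> span P = {}"
    using connected_avoiding_span[OF G] p q by (metis IntD1)
  then have "C \<subseteq> A \<union> B" "A \<inter> B \<inter> C = {}" "A \<inter> C \<noteq> {}" "B \<inter> C \<noteq> {}"
    using covered p(1) q(1) disj by auto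
  with \<open>connected C\<close> A B show False
    unfolding connected_def by blast
qed

lemma test_set_not_subset_small_span:
  assumes "F \<in> test_sets" "|P| <o |UNIV :: 'a set|"
  shows "\<not> F \<subseteq> span P"
proof -
  obtain G A B where F: "F = G - (A \<union> B)" and G: "open G" "convex G" "G \<noteq> {}"
    and AB: "open A" "open B"
    and cases: "A = {} \<and> B = {} \<or> G \<inter> A \<noteq> {} \<and> G \<inter> B \<noteq> {} \<and> G \<inter> A \<inter> B = {}"
    using assms(1) unfolding test_sets_def by blast
  from cases show ?thesis
  proof
    assume "A = {} \<and> B = {}"
    then show ?thesis
      using F open_not_subset_small_span[OF G(1,3) assms(2)] by simp
  next
    assume "G \<inter> A \<noteq> {} \<and> G \<inter> B \<noteq> {} \<and> G \<inter> A \<inter> B = {}"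
    then show ?thesis
      using F separated_not_subset_small_span[OF G(1,2) AB _ _ _ assms(2)] by blast
  qed
qed

lemma independent_pairs_in_test_sets:
  assumes "{U::'a set. open U} \<lesssim> (UNIV :: 'a set)"
  obtains v :: "'a \<times> bool \<Rightarrow> 'a"
  where "inj v" "independent (range v)" "\<And>F. F \<in> test_sets \<Longrightarrow> \<exists>a. \<forall>b. v (a, b) \<in> F"
proof -
  obtain g :: "'a \<Rightarrow> 'a set" where g: "test_sets \<subseteq> range g"
    using test_sets_lepoll[OF infinite_UNIV assms] by (auto simp: lepoll_iff)
  define E where "E i = (if g (fst i) \<in> test_sets then g (fst i) else UNIV)" for i :: "'a \<times> bool"
  have E: "E i \<in> test_sets" for i
    unfolding E_def using open_convex_in_test_sets[of "UNIV :: 'a set"] by simp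
  have "|UNIV :: bool set| \<le>o |UNIV :: 'a set|"
    by (rule ordLess_imp_ordLeq, rule finite_ordLess_infinite[OF card_of_Well_order card_of_Well_order])
      (simp_all add: Field_card_of infinite_UNIV)
  then have card_pairs: "|UNIV :: ('a \<times> bool) set| =o |UNIV :: 'a set|"
    using card_of_Times_infinite[OF infinite_UNIV, of "UNIV :: bool set"] by (simp add: UNIV_Times_UNIV)
  have not_spanned: "\<exists>z\<in>E i. z \<notin> span P" if "|P| <o |UNIV :: ('a \<times> bool) set|" for i P
  proof -
    have "|P| <o |UNIV :: 'a set|"
      using that card_pairs by (rule ordLess_ordIso_trans)
    then show ?thesis
      using test_set_not_subset_small_span[OF E] by blast
  qed
  obtain v where "inj v" "independent (range v)" "\<And>i. v i \<in> E i"
    using independent_choice[of E, OF not_spanned] by blast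
  moreover have "\<exists>a. \<forall>b. v (a, b) \<in> F" if F: "F \<in> test_sets" for F
  proof -
    obtain a where "F = g a"
      using g F by blast
    then have "E (a, b) = F" for b
      unfolding E_def using F by simp
    then show ?thesis
      using \<open>\<And>i. v i \<in> E i\<close> by metis
  qed
  ultimately show thesis
    using that by blast
qed

lemma exists_connected_dense_bases:
  assumes "{U::'a set. open U} \<lesssim> (UNIV :: 'a set)"
  shows "\<exists>\<B>::'a set set. \<B> \<approx> (UNIV :: 'a set set)
           \<and> (\<forall>B\<in>\<B>. hamel_basis sc B \<and> connected B \<and> locally connected B \<and> closure B = UNIV)"
proof -
  obtain v :: "'a \<times> bool \<Rightarrow> 'a"
    where v: "inj v" "independent (range v)" and hits: "\<And>F. F \<in> test_sets \<Longrightarrow> \<exists>a. \<forall>b. v (a, b) \<in> F"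
    using independent_pairs_in_test_sets[OF assms] by blast
  obtain \<B> :: "'a set set" where "\<B> \<approx> (UNIV :: 'a set set)"
    and \<B>: "\<And>B. B \<in> \<B> \<Longrightarrow> hamel_basis sc B \<and> (\<forall>a. \<exists>b. v (a, b) \<in> B)"
    using bases_selecting_from_pairs[OF v] by blast
  have meets: "\<forall>F\<in>test_sets. B \<inter> F \<noteq> {}" if "B \<in> \<B>" for B
  proof
    fix F :: "'a set"
    assume "F \<in> test_sets"
    then obtain a where "\<forall>b. v (a, b) \<in> F"
      using hits by blast
    moreover obtain b where "v (a, b) \<in> B"
      using \<B>[OF \<open>B \<in> \<B>\<close>] by blast
    ultimately show "B \<inter> F \<noteq> {}"
      by blast
  qed
  show ?thesis
  proof (intro exI conjI ballI)
    show "\<B> \<approx> (UNIV :: 'a set set)"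
      by fact
    fix B
    assume "B \<in> \<B>"
    then show "hamel_basis sc B" "connected B" "locally connected B" "closure B = UNIV"
      using \<B>[OF \<open>B \<in> \<B>\<close>] connected_dense_if_meets_test_sets[OF meets[OF \<open>B \<in> \<B>\<close>]]
      by blast+
  qed
qed

end

lemma (in scaleR_extension) dim_eq_card_if_basis_eqpoll_UNIV:
  assumes "hamel_basis sc H" "infinite H" "H \<approx> (UNIV :: 'a set)"
  shows "dim_eq_card sc emb"
proof (rule dim_eq_card.intro[OF scaleR_extension_axioms], rule dim_eq_card_axioms.intro)
  show "infinite (UNIV :: 'a set)"
    using assms(2) by (rule infinite_super[OF subset_UNIV])
  show "span P \<noteq> UNIV" if "|P| <o |UNIV :: 'a set|" for P
  proof
    assume "span P = UNIV"
    moreover have "independent H" "span H = UNIV"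
      using assms(1) unfolding hamel_basis_def by simp_all
    ultimately have "H \<lesssim> P"
      using independent_lepoll_if_span_eq[of H P] by simp
    then have "|H| \<le>o |P|"
      unfolding lepoll_def card_of_ordLeq .
    moreover have "|UNIV :: 'a set| =o |H|"
      using assms(3) unfolding eqpoll_iff_card_of_ordIso by (rule ordIso_symmetric)
    ultimately have "|UNIV :: 'a set| \<le>o |P|"
      using ordIso_ordLeq_trans by blast
    with that show False
      using not_ordLess_ordLeq by blast
  qed
qed

lemma (in scaleR_extension) exists_connected_dense_bases_if_basis_eqpoll_UNIV:
  assumes "\<not> (\<exists>B. finite B \<and> hamel_basis sc B)" "{U::'a set. open U} \<approx> (UNIV :: 'a set)"
    and "hamel_basis sc H" "H \<approx> (UNIV :: 'a set)"
  shows "\<exists>\<B>::'a set set. \<B> \<approx> (UNIV :: 'a set set)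
           \<and> (\<forall>B\<in>\<B>. hamel_basis sc B \<and> connected B \<and> locally connected B \<and> closure B = UNIV)"
proof -
  have "infinite H"
    using assms(1,3) by blast
  then interpret dim_eq_card sc emb
    by (rule dim_eq_card_if_basis_eqpoll_UNIV[OF assms(3) _ assms(4)])
  show ?thesis
    using exists_connected_dense_bases[OF eqpoll_imp_lepoll[OF assms(2)]] .
qed

lemma scaleR_extension_scaleR: "scaleR_extension (scaleR :: real \<Rightarrow> 'a::real_normed_vector \<Rightarrow> 'a) (\<lambda>r. r)"
  unfolding scaleR_extension_def scaleR_extension_axioms_def
  using real_vector.vector_space_axioms by simp

lemma scaleR_extension_if_complex_normed_structure:
  "complex_normed_structure sc \<Longrightarrow> scaleR_extension sc complex_of_real"
  unfolding complex_normed_structure_def scaleR_extension_def scaleR_extension_axioms_def by simp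

theorem theorem2:
  shows "(\<not> (\<exists>B. finite B \<and> hamel_basis (scaleR :: real \<Rightarrow> 'a::real_normed_vector \<Rightarrow> 'a) B)
          \<and> {U::'a set. open U} \<approx> (UNIV :: 'a set)
          \<and> (\<exists>B. hamel_basis (scaleR :: real \<Rightarrow> 'a \<Rightarrow> 'a) B \<and> B \<approx> (UNIV :: 'a set))
          \<longrightarrow> (\<exists>\<B>::'a set set. \<B> \<approx> (UNIV :: 'a set set)
                \<and> (\<forall>B\<in>\<B>. hamel_basis (scaleR :: real \<Rightarrow> 'a \<Rightarrow> 'a) B \<and> connected B
                          \<and> locally connected B \<and> closure B = UNIV)))
   \<and> (\<forall>sc :: complex \<Rightarrow> 'b::real_normed_vector \<Rightarrow> 'b.
          complex_normed_structure sc
          \<and> \<not> (\<exists>B. finite B \<and> hamel_basis sc B)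
          \<and> {U::'b set. open U} \<approx> (UNIV :: 'b set)
          \<and> (\<exists>B. hamel_basis sc B \<and> B \<approx> (UNIV :: 'b set))
          \<longrightarrow> (\<exists>\<B>::'b set set. \<B> \<approx> (UNIV :: 'b set set)
                \<and> (\<forall>B\<in>\<B>. hamel_basis sc B \<and> connected B
                          \<and> locally connected B \<and> closure B = UNIV)))"
  by (intro conjI allI impI; elim conjE exE;
      (rule scaleR_extension.exists_connected_dense_bases_if_basis_eqpoll_UNIV[OF
          scaleR_extension_scaleR]
      | rule scaleR_extension.exists_connected_dense_bases_if_basis_eqpoll_UNIV[OF
          scaleR_extension_if_complex_normed_structure]);
      assumption)

end
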